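(* Given $t\ge0$, define \[ \varphi(u)=2\sqrt{\frac{u+1}{3}}\cos\Big[\tfrac13\arccos\Big(-t\Big(\frac{u+1}{3}\Big)^{-3/2}\Big)\Big] \] for $u\ge 3t^{2/3}-1$. Then: (i) $\varphi(u)$ and $\varphi^2(u)$ are strictly increasing on $[3t^{2/3}-1,\infty)$; (ii) if $0\le t\le1$, then $\varphi(2t)=1$; (iii) if $0\le t<1$, then $\varphi^2(u)$ is Lipschitz continuous on $[2t,\infty)$. *)

theory Defs
  imports "HOL-Analysis.Analysis"
begin

definition phi :: "real \<Rightarrow> real \<Rightarrow> real" where
  "phi t u = 2 * sqrt ((u + 1) / 3) *
     cos (arccos (- t * ((u + 1) / 3) powr (-3/2)) / 3)"

end

theory Submission
  imports Defs
begin

text \<open>Put \<open>s = sqrt ((u + 1) / 3)\<close>. Then \<open>phi t u\<close> is Viete's trigonometric formula for the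
  largest root of \<open>x\<^sup>3 - (u + 1) x + 2 t = 0\<close>, so in particular \<open>phi t u \<ge> s\<close>. As \<open>u\<close> grows,
  both \<open>s\<close> and \<open>-t / s\<^sup>3\<close> increase, hence so does the cosine factor, giving strict monotonicity.
  At \<open>u = 2 t\<close> the cubic factors as \<open>(x - 1)(x\<^sup>2 + x - 2 t)\<close>, and for \<open>t \<le> 1\<close> the bound
  \<open>phi \<ge> s\<close> selects the root \<open>1\<close>. For \<open>u \<ge> 2 t\<close> we thus have \<open>phi \<ge> 1\<close> and
  \<open>u + 1 = phi\<^sup>2 + 2 t / phi\<close>; on \<open>[1, \<infinity>)\<close> the map \<open>x \<mapsto> x\<^sup>2 + 2 t / x\<close> moves points at least
  \<open>1 - t\<close> times as far as \<open>x \<mapsto> x\<^sup>2\<close> does, which is the Lipschitz bound for \<open>phi\<^sup>2\<close>.\<close>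

lemma cos_arccos_div3_ge_half:
  fixes y :: real
  assumes "-1 \<le> y" "y \<le> 1"
  shows "1/2 \<le> cos (arccos y / 3)"
proof -
  have "0 \<le> arccos y" "arccos y \<le> pi" using arccos_bounded[OF assms] by auto
  then have "cos (pi/3) \<le> cos (arccos y / 3)"
    by (subst cos_mono_le_eq) auto
  then show ?thesis by (simp add: cos_60)
qed

lemma cos_arccos_div3_mono:
  fixes y y' :: real
  assumes "-1 \<le> y" "y \<le> y'" "y' \<le> 1"
  shows "cos (arccos y / 3) \<le> cos (arccos y' / 3)"
proof -
  have "arccos y' \<le> arccos y" using assms by (rule arccos_le_arccos)
  moreover have "0 \<le> arccos y" "arccos y \<le> pi" "0 \<le> arccos y'" "arccos y' \<le> pi"
    using arccos_bounded assms by auto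
  ultimately show ?thesis by (subst cos_mono_le_eq) auto
qed

lemma cos_arccos_div3_triple:
  fixes y :: real
  assumes "-1 \<le> y" "y \<le> 1"
  shows "4 * cos (arccos y / 3) ^ 3 - 3 * cos (arccos y / 3) = y"
  using cos_treble_cos[of "arccos y / 3"] assms by simp

lemma neg_div_cube_bounded:
  fixes s t :: real
  assumes "\<bar>t\<bar> \<le> s ^ 3"
  shows "-1 \<le> - t / s ^ 3 \<and> - t / s ^ 3 \<le> 1"
proof (cases "s = 0")
  case False
  have "0 \<le> s ^ 3" using assms by (rule order_trans[OF abs_ge_zero])
  with False have "0 < s ^ 3" by (simp add: less_le)
  then have "\<bar>- t / s ^ 3\<bar> \<le> 1" using assms by (simp add: abs_divide)
  then show ?thesis unfolding abs_le_iff by linarith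
qed simp

definition trig_root :: "real \<Rightarrow> real \<Rightarrow> real" where
  "trig_root s t = 2 * s * cos (arccos (- t / s ^ 3) / 3)"

lemma trig_root_cubic:
  fixes s t :: real
  assumes "\<bar>t\<bar> \<le> s ^ 3"
  shows "trig_root s t ^ 3 - 3 * s\<^sup>2 * trig_root s t + 2 * t = 0"
proof -
  define c where "c = cos (arccos (- t / s ^ 3) / 3)"
  have "4 * c ^ 3 - 3 * c = - t / s ^ 3"
    unfolding c_def using neg_div_cube_bounded[OF assms] by (simp add: cos_arccos_div3_triple)
  moreover have "s ^ 3 * (- t / s ^ 3) = - t"
    using assms by (cases "s = 0") auto
  ultimately have "s ^ 3 * (4 * c ^ 3 - 3 * c) = - t" by simp
  then show ?thesis unfolding trig_root_def c_def[symmetric] by algebra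
qed

lemma trig_root_ge:
  fixes s t :: real
  assumes "\<bar>t\<bar> \<le> s ^ 3"
  shows "s \<le> trig_root s t"
proof -
  have "0 \<le> s ^ 3" using assms by (rule order_trans[OF abs_ge_zero])
  then have "0 \<le> s" by (simp add: zero_le_odd_power)
  moreover have "1/2 \<le> cos (arccos (- t / s ^ 3) / 3)"
    using neg_div_cube_bounded[OF assms] by (blast intro: cos_arccos_div3_ge_half)
  ultimately have "s * 1 \<le> s * (2 * cos (arccos (- t / s ^ 3) / 3))"
    by (intro mult_left_mono) auto
  then show ?thesis unfolding trig_root_def by simp
qed

lemma trig_root_strict_mono:
  fixes s s' t :: real
  assumes "0 \<le> t" "t \<le> s ^ 3" "s < s'"
  shows "trig_root s t < trig_root s' t"
proof -
  have "0 \<le> s ^ 3" using assms(1,2) by (rule order_trans)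
  then have s: "0 \<le> s" by (simp add: zero_le_odd_power)
  have cube: "s ^ 3 < s' ^ 3" using assms(3) s by (rule power_strict_mono) simp
  have div_le: "t / s' ^ 3 \<le> t / s ^ 3"
  proof (cases "s = 0")
    case False
    then have "0 < s ^ 3" using s by simp
    then show ?thesis using cube assms(1,3) by (intro divide_left_mono) (auto simp: zero_less_mult_iff)
  qed (use assms in simp)
  have bounded: "\<bar>t\<bar> \<le> s ^ 3" "\<bar>t\<bar> \<le> s' ^ 3" using assms(1,2) cube by auto
  define c where "c = cos (arccos (- t / s ^ 3) / 3)"
  define c' where "c' = cos (arccos (- t / s' ^ 3) / 3)"
  have "c \<le> c'" unfolding c_def c'_def
    using div_le neg_div_cube_bounded[OF bounded(1)] neg_div_cube_bounded[OF bounded(2)]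
    by (intro cos_arccos_div3_mono) auto
  have "1/2 \<le> c'" unfolding c'_def
    using neg_div_cube_bounded[OF bounded(2)] by (blast intro: cos_arccos_div3_ge_half)
  have "2 * s * c \<le> 2 * s * c'" using s \<open>c \<le> c'\<close> by (simp add: mult_left_mono)
  also have "\<dots> < 2 * s' * c'" using assms(3) \<open>1/2 \<le> c'\<close> by (intro mult_strict_right_mono) auto
  finally show ?thesis unfolding trig_root_def c_def c'_def .
qed

lemma powr_neg_three_halves:
  fixes a :: real
  assumes "0 \<le> a"
  shows "a powr (-3/2) = 1 / sqrt a ^ 3"
proof (cases "a = 0")
  case False
  have "a powr (3/2) = (a powr (1/2)) ^ 3" using False by (simp add: powr_power)
  then show ?thesis using assms powr_minus_divide[of a "3/2"] by (simp add: powr_half_sqrt)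
qed simp

lemma powr_two_thirds_le_iff:
  fixes t a :: real
  assumes "0 \<le> t" "0 \<le> a"
  shows "t powr (2/3) \<le> a \<longleftrightarrow> t \<le> sqrt a ^ 3"
proof (cases "t = 0")
  case False
  define r where "r = t powr (1/3)"
  have r: "0 \<le> r" unfolding r_def by simp
  have "t powr (2/3) \<le> a \<longleftrightarrow> r ^ 2 \<le> a" using False by (simp add: r_def powr_power)
  also have "\<dots> \<longleftrightarrow> r \<le> sqrt a"
    using r by (simp add: real_le_rsqrt real_sqrt_le_iff[symmetric, of "r^2"])
  also have "\<dots> \<longleftrightarrow> r ^ 3 \<le> sqrt a ^ 3" using r assms(2) by simp
  also have "r ^ 3 = t" using False assms(1) by (simp add: r_def powr_power)
  finally show ?thesis .
qed (use assms in simp)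

lemma phi_eq_trig_root:
  fixes t :: real
  assumes "-1 \<le> u"
  shows "phi t u = trig_root (sqrt ((u + 1) / 3)) t"
proof -
  have "((u + 1) / 3) powr (-3/2) = 1 / sqrt ((u + 1) / 3) ^ 3"
    using assms by (intro powr_neg_three_halves) simp
  then show ?thesis unfolding phi_def trig_root_def by simp
qed

lemma phi_domain_iff:
  fixes t :: real
  assumes "0 \<le> t"
  shows "3 * t powr (2/3) - 1 \<le> u \<longleftrightarrow> -1 \<le> u \<and> t \<le> sqrt ((u + 1) / 3) ^ 3"
proof (cases "-1 \<le> u")
  case True
  then show ?thesis using powr_two_thirds_le_iff[OF assms, of "(u + 1) / 3"] by auto
next
  case False
  then have "\<not> 3 * t powr (2/3) - 1 \<le> u" using powr_ge_zero[of t "2/3"] by linarith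
  with False show ?thesis by simp
qed

lemma phi_strict_mono:
  fixes t :: real
  assumes "0 \<le> t"
  shows "strict_mono_on {3 * t powr (2/3) - 1..} (phi t)"
proof (rule strict_mono_onI)
  fix u v
  assume "u \<in> {3 * t powr (2/3) - 1..}" "v \<in> {3 * t powr (2/3) - 1..}" "u < v"
  then have "-1 \<le> u" "-1 \<le> v" "t \<le> sqrt ((u + 1) / 3) ^ 3"
    using phi_domain_iff[OF assms] by auto
  moreover have "sqrt ((u + 1) / 3) < sqrt ((v + 1) / 3)" using \<open>u < v\<close> by simp
  ultimately show "phi t u < phi t v"
    using assms by (simp add: phi_eq_trig_root trig_root_strict_mono)
qed

lemma phi_ge_sqrt:
  fixes t :: real
  assumes "0 \<le> t" "3 * t powr (2/3) - 1 \<le> u"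
  shows "sqrt ((u + 1) / 3) \<le> phi t u"
  using assms phi_domain_iff[OF assms(1)] by (simp add: phi_eq_trig_root trig_root_ge)

lemma phi_cubic:
  fixes t :: real
  assumes "0 \<le> t" "3 * t powr (2/3) - 1 \<le> u"
  shows "phi t u ^ 3 - (u + 1) * phi t u + 2 * t = 0"
proof -
  have u: "-1 \<le> u" and t: "\<bar>t\<bar> \<le> sqrt ((u + 1) / 3) ^ 3"
    using assms phi_domain_iff[OF assms(1)] by auto
  have "3 * sqrt ((u + 1) / 3) ^ 2 = u + 1" using u by simp
  then show ?thesis using trig_root_cubic[OF t] by (simp add: phi_eq_trig_root[OF u])
qed

lemma phi_sq_strict_mono:
  fixes t :: real
  assumes "0 \<le> t"
  shows "strict_mono_on {3 * t powr (2/3) - 1..} (\<lambda>u. phi t u ^ 2)"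
proof (rule strict_mono_onI)
  fix u v
  assume u: "u \<in> {3 * t powr (2/3) - 1..}" and v: "v \<in> {3 * t powr (2/3) - 1..}" and "u < v"
  have "0 \<le> sqrt ((u + 1) / 3)" using u phi_domain_iff[OF assms] by simp
  also have "\<dots> \<le> phi t u" using u phi_ge_sqrt[OF assms] by simp
  finally have "0 \<le> phi t u" .
  moreover have "phi t u < phi t v" using phi_strict_mono[OF assms] u v \<open>u < v\<close> by (rule strict_mono_onD)
  ultimately show "phi t u ^ 2 < phi t v ^ 2" by (simp add: power_strict_mono)
qed

lemma two_mult_mem_phi_domain:
  fixes t :: real
  assumes "0 \<le> t"
  shows "3 * t powr (2/3) - 1 \<le> 2 * t"
proof -
  have "(2 * t + 1) ^ 3 - 27 * t\<^sup>2 = (t - 1)\<^sup>2 * (8 * t + 1)"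
    by (simp add: algebra_simps power2_eq_square power3_eq_cube)
  moreover have "0 \<le> (t - 1)\<^sup>2 * (8 * t + 1)" using assms by simp
  ultimately have "t\<^sup>2 \<le> ((2 * t + 1) / 3) ^ 3" by (simp add: power_divide)
  also have "\<dots> = (sqrt ((2 * t + 1) / 3) ^ 2) ^ 3" using assms by simp
  also have "\<dots> = (sqrt ((2 * t + 1) / 3) ^ 3)\<^sup>2" by (simp flip: power_mult)
  finally have "t \<le> sqrt ((2 * t + 1) / 3) ^ 3" by (rule power2_le_imp_le) (use assms in simp)
  with assms show ?thesis by (simp add: phi_domain_iff)
qed

lemma phi_two_mult:
  fixes t :: real
  assumes "0 \<le> t" "t \<le> 1"
  shows "phi t (2 * t) = 1"
proof -
  define x where "x = phi t (2 * t)"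
  have dom: "3 * t powr (2/3) - 1 \<le> 2 * t" using two_mult_mem_phi_domain[OF assms(1)] .
  have "(x - 1) * (x\<^sup>2 + x - 2 * t) = x ^ 3 - (2 * t + 1) * x + 2 * t"
    by (simp add: algebra_simps power2_eq_square power3_eq_cube)
  then have root: "(x - 1) * (x\<^sup>2 + x - 2 * t) = 0"
    using phi_cubic[OF assms(1) dom] by (simp add: x_def add.commute)
  have sqrt_le: "sqrt ((2 * t + 1) / 3) \<le> x" unfolding x_def using phi_ge_sqrt[OF assms(1) dom] by simp
  moreover have "0 \<le> sqrt ((2 * t + 1) / 3)" using assms(1) by simp
  ultimately have x0: "0 \<le> x" by linarith
  have x_sq: "2 * t + 1 \<le> 3 * x\<^sup>2" using sqrt_le_D[OF sqrt_le] by simp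
  text \<open>If \<open>x\<^sup>2 + x = 2 t\<close>, the lower bound gives \<open>3 x\<^sup>2 \<ge> x\<^sup>2 + x + 1\<close>, i.e. \<open>x \<ge> 1\<close>,
    while \<open>t \<le> 1\<close> gives \<open>x\<^sup>2 + x \<le> 2\<close>, i.e. \<open>x \<le> 1\<close>.\<close>
  show ?thesis
  proof (rule ccontr)
    assume "phi t (2 * t) \<noteq> 1"
    then have "x \<noteq> 1" "x\<^sup>2 + x = 2 * t" using root by (simp_all add: x_def)
    moreover have "(2 * x + 1) * (x - 1) = 2 * x\<^sup>2 - x - 1"
      by (simp add: algebra_simps power2_eq_square)
    ultimately have "0 \<le> (2 * x + 1) * (x - 1)" using x_sq by linarith
    then have "1 < x" using x0 \<open>x \<noteq> 1\<close> by (simp add: zero_le_mult_iff)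
    then have "1 < x\<^sup>2" by (simp add: one_less_power)
    with \<open>1 < x\<close> have "2 < x\<^sup>2 + x" by linarith
    then show False using \<open>x\<^sup>2 + x = 2 * t\<close> assms(2) by linarith
  qed
qed

lemma phi_ge_one:
  fixes t :: real
  assumes "0 \<le> t" "t \<le> 1" "2 * t \<le> u"
  shows "1 \<le> phi t u"
proof -
  have "2 * t \<in> {3 * t powr (2/3) - 1..}" "u \<in> {3 * t powr (2/3) - 1..}"
    using two_mult_mem_phi_domain[OF assms(1)] assms(3) by auto
  then have "phi t (2 * t) \<le> phi t u"
    using strict_mono_on_leD[OF phi_strict_mono[OF assms(1)]] assms(3) by blast
  then show ?thesis using phi_two_mult[OF assms(1,2)] by simp
qed

lemma phi_sq_add_div_phi:
  fixes t :: real
  assumes "0 \<le> t" "t \<le> 1" "2 * t \<le> u"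
  shows "u + 1 = phi t u ^ 2 + 2 * t / phi t u"
proof -
  have "3 * t powr (2/3) - 1 \<le> u" using two_mult_mem_phi_domain[OF assms(1)] assms(3) by simp
  then have "phi t u ^ 3 - (u + 1) * phi t u + 2 * t = 0" by (rule phi_cubic[OF assms(1)])
  then have "(u + 1) * phi t u = phi t u ^ 2 * phi t u + 2 * t"
    by (simp add: power2_eq_square power3_eq_cube algebra_simps)
  then show ?thesis using phi_ge_one[OF assms] by (simp add: field_simps)
qed

lemma dist_sq_le_dist_sq_add_div:
  fixes t x y :: real
  assumes "0 \<le> t" "t \<le> 1" "1 \<le> x" "1 \<le> y"
  shows "(1 - t) * \<bar>x\<^sup>2 - y\<^sup>2\<bar> \<le> \<bar>(x\<^sup>2 + 2 * t / x) - (y\<^sup>2 + 2 * t / y)\<bar>"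
proof -
  define K where "K = x + y - 2 * t / (x * y)"
  have diff: "(x\<^sup>2 + 2 * t / x) - (y\<^sup>2 + 2 * t / y) = (x - y) * K"
    using assms by (simp add: K_def field_simps power2_eq_square)
  have "1 \<le> x * y" using assms by (metis mult_mono mult_1 zero_le_one order_trans)
  then have "2 * t / (x * y) \<le> 2 * t / 1" using assms(1) by (intro divide_left_mono) auto
  also have "\<dots> = t * 2" by simp
  also have "\<dots> \<le> t * (x + y)" using assms by (intro mult_left_mono) auto
  finally have K: "(1 - t) * (x + y) \<le> K" unfolding K_def by (simp add: algebra_simps)
  moreover have "0 \<le> (1 - t) * (x + y)" using assms by simp
  ultimately have "0 \<le> K" by linarith
  have "(1 - t) * \<bar>x\<^sup>2 - y\<^sup>2\<bar> = \<bar>x - y\<bar> * ((1 - t) * (x + y))"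
    using assms by (simp add: power2_eq_square square_diff_square_factored abs_mult)
  also have "\<dots> \<le> \<bar>x - y\<bar> * K" using K by (simp add: mult_left_mono)
  also have "\<dots> = \<bar>(x\<^sup>2 + 2 * t / x) - (y\<^sup>2 + 2 * t / y)\<bar>"
    using \<open>0 \<le> K\<close> by (simp add: diff abs_mult)
  finally show ?thesis .
qed

lemma phi_sq_lipschitz:
  fixes t :: real
  assumes "0 \<le> t" "t < 1"
  shows "lipschitz_on (1 / (1 - t)) {2 * t..} (\<lambda>u. phi t u ^ 2)"
proof (rule lipschitz_onI)
  fix u v assume "u \<in> {2 * t..}" "v \<in> {2 * t..}"
  then have "(1 - t) * \<bar>phi t u ^ 2 - phi t v ^ 2\<bar> \<le> \<bar>(u + 1) - (v + 1)\<bar>"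
    using assms by (simp add: phi_sq_add_div_phi phi_ge_one dist_sq_le_dist_sq_add_div)
  then show "dist (phi t u ^ 2) (phi t v ^ 2) \<le> 1 / (1 - t) * dist u v"
    using assms(2) by (simp add: dist_real_def field_simps)
qed (use assms in simp)

theorem lemma7:
  fixes t :: real
  assumes "t \<ge> 0"
  shows "strict_mono_on {3 * t powr (2/3) - 1..} (phi t)
       \<and> strict_mono_on {3 * t powr (2/3) - 1..} (\<lambda>u. (phi t u)^2)
       \<and> (t \<le> 1 \<longrightarrow> phi t (2 * t) = 1)
       \<and> (t < 1 \<longrightarrow> (\<exists>L. lipschitz_on L {2 * t..} (\<lambda>u. (phi t u)^2)))"
proof (intro conjI impI)
  show "strict_mono_on {3 * t powr (2/3) - 1..} (phi t)"
    using assms by (rule phi_strict_mono)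
  show "strict_mono_on {3 * t powr (2/3) - 1..} (\<lambda>u. (phi t u)^2)"
    using assms by (rule phi_sq_strict_mono)
  show "phi t (2 * t) = 1" if "t \<le> 1"
    using assms that by (rule phi_two_mult)
  show "\<exists>L. lipschitz_on L {2 * t..} (\<lambda>u. (phi t u)^2)" if "t < 1"
    using phi_sq_lipschitz[OF assms that] by blast
qed

end
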